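(* Let $\mathbf{A}=\langle A;\oplus,-,{}^{+},{}^{-},0,1\rangle$ be a quasi-MV* algebra and let $\mathbf{W}=\langle W;\to,\neg,{}^{+},{}^{-},1\rangle$ be a quasi-Wajsberg* algebra. Let $f(\mathbf{A})=\langle A;\to,\neg,{}^{+},{}^{-},1\rangle$, where $x\to y:=-x\oplus y$ and $\neg x:=-x$ (the operations ${}^+,{}^-$ and the constant $1$ are those of $\mathbf{A}$), and let $g(\mathbf{W})=\langle W;\oplus,-,{}^{+},{}^{-},0,1\rangle$, where $0:=x\to x$ (for any $x\in W$), $x\oplus y:=\neg x\to y$ and $-x:=\neg x$ (the operations ${}^+,{}^-$ and the constant $1$ are those of $\mathbf{W}$). Then $g(f(\mathbf{A}))=\mathbf{A}$ and $f(g(\mathbf{W}))=\mathbf{W}$; hence $f$ and $g$ are mutually inverse correspondences between quasi-MV* algebras and quasi-Wajsberg* algebras.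
   Context: A quasi-MV* algebra is an algebra $\langle A;\oplus,-,{}^{+},{}^{-},0,1\rangle$ of type $\langle2,1,1,1,0,0\rangle$ such that for all $x,y,z\in A$: (QMV*1) $x\oplus y=y\oplus x$; (QMV*2) $(1\oplus x)\oplus(y\oplus(1\oplus z))=((1\oplus x)\oplus y)\oplus(1\oplus z)$; (QMV*3) $(x\oplus 1)\oplus 1=1$; (QMV*4) $(x\oplus y)\oplus 0=x\oplus y$; (QMV*5) $x^{+}\oplus 0=(x\oplus 0)^{+}=1\oplus(-1\oplus x)$ and $x^{-}\oplus 0=(x\oplus 0)^{-}=-1\oplus(1\oplus x)$; (QMV*6) $x\oplus y=(x^{+}\oplus y^{+})\oplus(x^{-}\oplus y^{-})$; (QMV*7) $0=-0$; (QMV*8) $x\oplus(-x)=0$; (QMV*9) $-(x\oplus y)=-x\oplus(-y)$; (QMV*10) $-(-x)=x$; (QMV*11) $(-x\oplus(x\oplus y))^{+}=-x^{+}\oplus(x^{+}\oplus y^{+})$; (QMV*12) $x\vee y=y\vee x$; (QMV*13) $x\vee(y\vee z)=(x\vee y)\vee z$; (QMV*14) $x\oplus(y\vee z)=(x\oplus y)\vee(x\oplus z)$; where $x\vee y:=(x^{+}\oplus(-x^{+}\oplus y^{+})^{+})\oplus(x^{-}\oplus(-x^{-}\oplus y^{-})^{+})$. Here the postfix operations ${}^+,{}^-$ bind tighter than $-$, so e.g. $-x^{+}$ means $-(x^{+})$. A quasi-Wajsberg* algebra is an algebra $\langle W;\to,\neg,{}^{+},{}^{-},1\rangle$ of type $\langle2,1,1,1,0\rangle$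 such that for all $x,y,z\in W$: (QW*1) $x\to y=\neg y\to\neg x$; (QW*2) $(x\to 1)\to((y\to 1)\to z)=(y\to 1)\to((x\to 1)\to z)$; (QW*3) $(1\to x)\to 1=1$; (QW*4) $(z\to z)\to(x\to y)=x\to y$; (QW*5) $(1\to 1)\to x^{+}=((1\to 1)\to x)^{+}=(x\to 1)\to 1$ and $(1\to 1)\to x^{-}=((1\to 1)\to x)^{-}=(x\to\neg 1)\to\neg 1$; (QW*6) $x\to y=(y^{+}\to x^{-})\to(x^{+}\to y^{-})$; (QW*7) $\neg(x\to y)=y\to x$; (QW*8) $\neg\neg x=x$; (QW*9) $(x\to(\neg x\to y))^{+}=x^{+}\to(\neg x^{+}\to y^{+})$; (QW*10) $x\vee y=y\vee x$; (QW*11) $x\vee(y\vee z)=(x\vee y)\vee z$; (QW*12) $x\to(y\vee z)=(x\to y)\vee(x\to z)$; where $x\vee y:=((x^{+}\to y^{+})^{+}\to(\neg x)^{-})\to((y^{-}\to x^{-})^{-}\to x^{-})$. Conventions: ${}^+,{}^-$ bind tighter than $\neg$, which binds tighter than $\to$ (so $\neg x^{+}$ means $\neg(x^{+})$ and $\neg x\to y$ means $(\neg x)\to y$). In a quasi-Wajsberg* algebra $x\to x=y\to y$ for all $x,y$, so $0:=x\to x$ is well defined. *)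

theory Defs
  imports Main
begin

text \<open>Algebras are modelled with the whole type as carrier.\<close>

record 'a qmv_sig =
  qadd :: "'a \<Rightarrow> 'a \<Rightarrow> 'a"
  qneg :: "'a \<Rightarrow> 'a"
  qplus :: "'a \<Rightarrow> 'a"
  qminus :: "'a \<Rightarrow> 'a"
  qzero :: 'a
  qone :: 'a

record 'a qw_sig =
  wimp :: "'a \<Rightarrow> 'a \<Rightarrow> 'a"
  wnot :: "'a \<Rightarrow> 'a"
  wplus :: "'a \<Rightarrow> 'a"
  wminus :: "'a \<Rightarrow> 'a"
  wone :: 'a

definition qmv_join :: "'a qmv_sig \<Rightarrow> 'a \<Rightarrow> 'a \<Rightarrow> 'a" where
  "qmv_join A x y =
     (let ad = qadd A; ng = qneg A; p = qplus A; m = qminus A in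
      ad (ad (p x) (p (ad (ng (p x)) (p y)))) (ad (m x) (p (ad (ng (m x)) (m y)))))"

definition is_qmv_star :: "'a qmv_sig \<Rightarrow> bool" where
  "is_qmv_star A \<longleftrightarrow>
    (let ad = qadd A; ng = qneg A; p = qplus A; m = qminus A; z = qzero A; e = qone A;
         jn = qmv_join A in
     (\<forall>x y. ad x y = ad y x) \<and>
     (\<forall>x y w. ad (ad e x) (ad y (ad e w)) = ad (ad (ad e x) y) (ad e w)) \<and>
     (\<forall>x. ad (ad x e) e = e) \<and>
     (\<forall>x y. ad (ad x y) z = ad x y) \<and>
     (\<forall>x. ad (p x) z = p (ad x z) \<and> p (ad x z) = ad e (ad (ng e) x)) \<and>
     (\<forall>x. ad (m x) z = m (ad x z) \<and> m (ad x z) = ad (ng e) (ad e x)) \<and>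
     (\<forall>x y. ad x y = ad (ad (p x) (p y)) (ad (m x) (m y))) \<and>
     z = ng z \<and>
     (\<forall>x. ad x (ng x) = z) \<and>
     (\<forall>x y. ng (ad x y) = ad (ng x) (ng y)) \<and>
     (\<forall>x. ng (ng x) = x) \<and>
     (\<forall>x y. p (ad (ng x) (ad x y)) = ad (ng (p x)) (ad (p x) (p y))) \<and>
     (\<forall>x y. jn x y = jn y x) \<and>
     (\<forall>x y w. jn x (jn y w) = jn (jn x y) w) \<and>
     (\<forall>x y w. ad x (jn y w) = jn (ad x y) (ad x w)))"

definition qw_join :: "'a qw_sig \<Rightarrow> 'a \<Rightarrow> 'a \<Rightarrow> 'a" where
  "qw_join W x y =
     (let im = wimp W; nt = wnot W; p = wplus W; m = wminus W in
      im (im (p (im (p x) (p y))) (m (nt x))) (im (m (im (m y) (m x))) (m x)))"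

definition is_qw_star :: "'a qw_sig \<Rightarrow> bool" where
  "is_qw_star W \<longleftrightarrow>
    (let im = wimp W; nt = wnot W; p = wplus W; m = wminus W; e = wone W;
         jn = qw_join W in
     (\<forall>x y. im x y = im (nt y) (nt x)) \<and>
     (\<forall>x y w. im (im x e) (im (im y e) w) = im (im y e) (im (im x e) w)) \<and>
     (\<forall>x. im (im e x) e = e) \<and>
     (\<forall>x y w. im (im w w) (im x y) = im x y) \<and>
     (\<forall>x. im (im e e) (p x) = p (im (im e e) x) \<and> p (im (im e e) x) = im (im x e) e) \<and>
     (\<forall>x. im (im e e) (m x) = m (im (im e e) x) \<and> m (im (im e e) x) = im (im x (nt e)) (nt e)) \<and>
     (\<forall>x y. im x y = im (im (p y) (m x)) (im (p x) (m y))) \<and>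
     (\<forall>x y. nt (im x y) = im y x) \<and>
     (\<forall>x. nt (nt x) = x) \<and>
     (\<forall>x y. p (im x (im (nt x) y)) = im (p x) (im (nt (p x)) (p y))) \<and>
     (\<forall>x y. jn x y = jn y x) \<and>
     (\<forall>x y w. jn x (jn y w) = jn (jn x y) w) \<and>
     (\<forall>x y w. im x (jn y w) = jn (im x y) (im x w)))"

text \<open>The translations f (quasi-MV* to quasi-Wajsberg*) and g (converse).
  In g, 0 := x \<rightarrow> x is taken with x := 1 (any x gives the same value in a QW* algebra).\<close>

definition f_qmv :: "'a qmv_sig \<Rightarrow> 'a qw_sig" where
  "f_qmv A = \<lparr> wimp = (\<lambda>x y. qadd A (qneg A x) y), wnot = qneg A,
              wplus = qplus A, wminus = qminus A, wone = qone A \<rparr>"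

definition g_qw :: "'a qw_sig \<Rightarrow> 'a qmv_sig" where
  "g_qw W = \<lparr> qadd = (\<lambda>x y. wimp W (wnot W x) y), qneg = wnot W,
             qplus = wplus W, qminus = wminus W,
             qzero = wimp W (wone W) (wone W), qone = wone W \<rparr>"

end

theory Submission
  imports Defs
begin

lemma qmv_star_add_commute:
  assumes "is_qmv_star A"
  shows "qadd A x y = qadd A y x"
proof -
  have "\<forall>x y. qadd A x y = qadd A y x"
    using assms unfolding is_qmv_star_def Let_def by (elim conjE) assumption
  then show ?thesis by blast
qed

lemma qmv_star_add_neg_self:
  assumes "is_qmv_star A"
  shows "qadd A x (qneg A x) = qzero A"
proof -
  have "\<forall>x. qadd A x (qneg A x) = qzero A"
    using assms unfolding is_qmv_star_def Let_def by (elim conjE) assumption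
  then show ?thesis by blast
qed

lemma qmv_star_neg_neg:
  assumes "is_qmv_star A"
  shows "qneg A (qneg A x) = x"
proof -
  have "\<forall>x. qneg A (qneg A x) = x"
    using assms unfolding is_qmv_star_def Let_def by (elim conjE) assumption
  then show ?thesis by blast
qed

lemma qmv_star_neg_one_add_one:
  assumes "is_qmv_star A"
  shows "qadd A (qneg A (qone A)) (qone A) = qzero A"
  using qmv_star_add_commute[OF assms] qmv_star_add_neg_self[OF assms] by metis

lemma qw_star_not_not:
  assumes "is_qw_star W"
  shows "wnot W (wnot W x) = x"
proof -
  have "\<forall>x. wnot W (wnot W x) = x"
    using assms unfolding is_qw_star_def Let_def by (elim conjE) assumption
  then show ?thesis by blast
qed

text \<open>The zero of \<open>g (f A)\<close> is \<open>1 \<rightarrow> 1 = -1 \<oplus> 1\<close>, whence the second hypothesis.\<close>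

lemma g_qw_f_qmv:
  assumes "\<And>x. qneg A (qneg A x) = x"
    and "qadd A (qneg A (qone A)) (qone A) = qzero A"
  shows "g_qw (f_qmv A) = A"
  by (simp add: g_qw_def f_qmv_def assms)

lemma f_qmv_g_qw:
  assumes "\<And>x. wnot W (wnot W x) = x"
  shows "f_qmv (g_qw W) = W"
  by (simp add: g_qw_def f_qmv_def assms)

theorem theorem3p1:
  fixes A :: "'a qmv_sig" and W :: "'b qw_sig"
  assumes "is_qmv_star A" and "is_qw_star W"
  shows "g_qw (f_qmv A) = A \<and> f_qmv (g_qw W) = W"
proof
  show "g_qw (f_qmv A) = A"
    by (rule g_qw_f_qmv[OF qmv_star_neg_neg[OF assms(1)] qmv_star_neg_one_add_one[OF assms(1)]])
  show "f_qmv (g_qw W) = W"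
    by (rule f_qmv_g_qw[OF qw_star_not_not[OF assms(2)]])
qed

end
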